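(* For positive integers $K\le P$ and $\theta=(K,P)$, we have $\lim_{n\to\infty}C^\star(\mathbb{K}(n;\theta))=C_{\rm K}(\theta)$ almost surely, where $C_{\rm K}(\theta)=\beta(\theta)/(1-q(\theta))^2$.
   Context: Random key graph: for positive integers $K\le P$, $\theta=(K,P)$ and $n\ge3$, let $K_1(\theta),\dots,K_n(\theta)$ be i.i.d. random subsets of $\{1,\dots,P\}$, each uniform over the $K$-element subsets; the random key graph $\mathbb{K}(n;\theta)$ on $\{1,\dots,n\}$ has an edge between distinct $i,j$ iff $K_i(\theta)\cap K_j(\theta)\ne\emptyset$. All graphs for different $n$ are defined on a common probability space. $q(\theta)=\binom{P-K}{K}/\binom{P}{K}$ if $2K\le P$ and $0$ otherwise; $r(\theta)=\binom{P-2K}{K}/\binom{P}{K}$ if $3K\le P$ and $0$ otherwise; $\beta(\theta)=(1-q)^3+q^3-qr$. For a finite simple graph $G$ with vertex set $V$, let $T_i(G)$ be the number of triangles containing vertex $i$ and $d_i$ its degree; the global clustering coefficient is $C^\star(G)=\sum_{i\in V}T_i(G)\big/\big(\tfrac12\sum_{i\in V}d_i(d_i-1)\big)$ if $\sum_i d_i(d_i-1)>0$, and $C^\star(G)=0$ otherwise. *)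

theory Defs
  imports "HOL-Probability.Probability"
begin

definition graph_degree :: "'v set \<Rightarrow> ('v \<Rightarrow> 'v \<Rightarrow> bool) \<Rightarrow> 'v \<Rightarrow> nat" where
  "graph_degree V E i = card {j \<in> V. E i j}"

definition triangles_at :: "'v set \<Rightarrow> ('v \<Rightarrow> 'v \<Rightarrow> bool) \<Rightarrow> 'v \<Rightarrow> nat" where
  "triangles_at V E i =
     card {{j, k} | j k. j \<in> V \<and> k \<in> V \<and> j \<noteq> k \<and> E i j \<and> E i k \<and> E j k}"

definition global_clustering :: "'v set \<Rightarrow> ('v \<Rightarrow> 'v \<Rightarrow> bool) \<Rightarrow> real" where
  "global_clustering V E =
     (let D = (\<Sum>i\<in>V. graph_degree V E i * (graph_degree V E i - 1)) in
      if D > 0 then real (\<Sum>i\<in>V. triangles_at V E i) / (real D / 2) else 0)"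

definition key_rings :: "nat \<Rightarrow> nat \<Rightarrow> nat set set" where
  "key_rings K P = {S. S \<subseteq> {1..P} \<and> card S = K}"

definition rkg_edge :: "(nat \<Rightarrow> 'w \<Rightarrow> nat set) \<Rightarrow> 'w \<Rightarrow> nat \<Rightarrow> nat \<Rightarrow> bool" where
  "rkg_edge Ks \<omega> i j \<longleftrightarrow> i \<noteq> j \<and> Ks i \<omega> \<inter> Ks j \<omega> \<noteq> {}"

definition rkg_q :: "nat \<Rightarrow> nat \<Rightarrow> real" where
  "rkg_q K P = (if 2 * K \<le> P then real ((P - K) choose K) / real (P choose K) else 0)"

definition rkg_r :: "nat \<Rightarrow> nat \<Rightarrow> real" where
  "rkg_r K P = (if 3 * K \<le> P then real ((P - 2 * K) choose K) / real (P choose K) else 0)"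

definition rkg_beta :: "nat \<Rightarrow> nat \<Rightarrow> real" where
  "rkg_beta K P = (1 - rkg_q K P) ^ 3 + rkg_q K P ^ 3 - rkg_q K P * rkg_r K P"

definition rkg_CK :: "nat \<Rightarrow> nat \<Rightarrow> real" where
  "rkg_CK K P = rkg_beta K P / (1 - rkg_q K P) ^ 2"

end

theory Submission
  imports Defs
begin

text \<open>
  The clustering coefficient of \<open>\<bbbK>(n;\<theta>)\<close> depends on the key rings only through their
  empirical frequencies \<open>f\<^sub>s(n)\<close>. The closed neighbourhood of vertex \<open>i\<close> has
  \<open>n \<Sum>\<^sub>t f\<^sub>t(n) [s\<^sub>i \<inter> t \<noteq> \<emptyset>]\<close> elements, one more than \<open>d\<^sub>i\<close>; hence \<open>\<Sum>\<^sub>i d\<^sub>i(d\<^sub>i - 1)\<close> is \<open>n\<^sup>3\<close> times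
  a quadratic form in \<open>f(n)\<close> up to lower order terms, and twice the number of triangles is \<open>n\<^sup>3\<close>
  times a cubic form up to \<open>O(n\<^sup>2)\<close>. By a strong law of large numbers (Hoeffding's inequality
  plus Borel--Cantelli) every \<open>f\<^sub>s(n)\<close> tends almost surely to \<open>1 / binom(P,K)\<close>, so \<open>C\<^sup>\<star>\<close> tends
  to the ratio of the two forms at the uniform distribution. A ring is disjoint from a fraction
  \<open>q\<close> of the rings, and two disjoint rings are both disjoint from a fraction \<open>r\<close>; writing each
  overlap indicator as one minus a disjointness indicator, the cubic form becomes
  \<open>(1 - q)\<^sup>3 + q\<^sup>3 - q r\<close> and the quadratic one \<open>(1 - q)\<^sup>2\<close>.
\<close>

section \<open>Loopless graphs of reflexive symmetric relations\<close>

lemma card_ordered_pairs_eq_twice_card_doubletons: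
  fixes V :: "'v::linorder set"
  assumes "finite V" and Q_sym: "\<And>j k. Q j k \<Longrightarrow> Q k j"
  shows "card {(j, k). j \<in> V \<and> k \<in> V \<and> j \<noteq> k \<and> Q j k}
       = 2 * card {{j, k} | j k. j \<in> V \<and> k \<in> V \<and> j \<noteq> k \<and> Q j k}"
proof -
  define Up where "Up = {(j, k). j \<in> V \<and> k \<in> V \<and> j < k \<and> Q j k}"
  define Down where "Down = {(j, k). j \<in> V \<and> k \<in> V \<and> k < j \<and> Q j k}"
  have finite_parts: "finite Up" "finite Down"
    unfolding Up_def Down_def by (rule finite_subset[of _ "V \<times> V"]; use assms in auto)+
  have "{(j, k). j \<in> V \<and> k \<in> V \<and> j \<noteq> k \<and> Q j k} = Up \<union> Down"
    unfolding Up_def Down_def by auto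
  moreover have "Up \<inter> Down = {}"
    unfolding Up_def Down_def by auto
  moreover have "bij_betw prod.swap Up Down"
    unfolding Up_def Down_def by (rule bij_betwI[where g = prod.swap]) (auto intro: Q_sym)
  moreover have "bij_betw (\<lambda>(j, k). {j, k}) Up
      {{j, k} | j k. j \<in> V \<and> k \<in> V \<and> j \<noteq> k \<and> Q j k}"
  proof (rule bij_betw_imageI)
    show "inj_on (\<lambda>(j, k). {j, k}) Up"
      unfolding Up_def by (auto intro!: inj_onI simp: doubleton_eq_iff)
    show "(\<lambda>(j, k). {j, k}) ` Up = {{j, k} | j k. j \<in> V \<and> k \<in> V \<and> j \<noteq> k \<and> Q j k}"
      unfolding Up_def
      by (auto simp: image_iff insert_commute intro: Q_sym dest: neq_iff[THEN iffD1])
  qed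
  ultimately show ?thesis
    using finite_parts by (simp add: card_Un_disjoint flip: bij_betw_same_card)
qed

lemma sum_of_bool_eq_card:
  "finite A \<Longrightarrow> (\<Sum>x\<in>A. of_bool (P x)) = of_nat (card {x \<in> A. P x})"
  by (simp add: Int_def)

lemma sum_sum_of_bool_eq_card:
  assumes "finite A" "finite B"
  shows "(\<Sum>a\<in>A. \<Sum>b\<in>B. of_bool (Q a b))
       = (of_nat (card {(a, b). a \<in> A \<and> b \<in> B \<and> Q a b}) :: 'c::semiring_1)"
proof -
  have "(\<Sum>a\<in>A. \<Sum>b\<in>B. of_bool (Q a b)) = (\<Sum>p\<in>A \<times> B. of_bool (Q (fst p) (snd p)) :: 'c)"
    by (simp only: sum.cartesian_product case_prod_unfold)
  also have "\<dots> = of_nat (card {p \<in> A \<times> B. Q (fst p) (snd p)})"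
    using assms by (simp only: sum_of_bool_eq_card finite_cartesian_product)
  also have "{p \<in> A \<times> B. Q (fst p) (snd p)} = {(a, b). a \<in> A \<and> b \<in> B \<and> Q a b}"
    by auto
  finally show ?thesis .
qed

context
  fixes V :: "'v::linorder set" and R :: "'v \<Rightarrow> 'v \<Rightarrow> bool"
  assumes finite_V: "finite V"
    and R_refl: "\<And>i. i \<in> V \<Longrightarrow> R i i"
    and R_sym: "\<And>i j. R i j \<Longrightarrow> R j i"
begin

lemma graph_degree_drop_loops:
  assumes "i \<in> V"
  shows "real (graph_degree V (\<lambda>i j. i \<noteq> j \<and> R i j) i) = (\<Sum>j\<in>V. of_bool (R i j)) - 1"
proof -
  have "{j \<in> V. i \<noteq> j \<and> R i j} = {j \<in> V. R i j} - {i}" by auto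
  moreover have "i \<in> {j \<in> V. R i j}"
    using assms R_refl by simp
  ultimately have "card {j \<in> V. i \<noteq> j \<and> R i j} = card {j \<in> V. R i j} - 1"
    by simp
  moreover have "0 < card {j \<in> V. R i j}"
    using assms R_refl finite_V by (auto simp: card_gt_0_iff)
  ultimately show ?thesis
    using finite_V by (simp add: graph_degree_def Int_def of_nat_diff)
qed

text \<open>The pairs \<open>(j, k)\<close> counted by \<open>W\<close> but not by the triangles are those with \<open>j = i\<close>,
  \<open>k = i\<close> or \<open>j = k\<close>.\<close>

lemma triangles_at_drop_loops:
  assumes "i \<in> V"
  defines "W \<equiv> (\<Sum>j\<in>V. \<Sum>k\<in>V. of_bool (R i j \<and> R i k \<and> R j k) :: real)"
  shows "0 \<le> W - 2 * real (triangles_at V (\<lambda>i j. i \<noteq> j \<and> R i j) i)"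
    and "W - 2 * real (triangles_at V (\<lambda>i j. i \<noteq> j \<and> R i j) i) \<le> 3 * real (card V)"
proof -
  define T where "T j k = ((i \<noteq> j \<and> R i j) \<and> (i \<noteq> k \<and> R i k) \<and> (j \<noteq> k \<and> R j k))"
    for j k
  have "(\<Sum>j\<in>V. \<Sum>k\<in>V. of_bool (j \<noteq> k \<and> T j k))
      = real (card {(j, k). j \<in> V \<and> k \<in> V \<and> j \<noteq> k \<and> T j k})"
    by (rule sum_sum_of_bool_eq_card[OF finite_V finite_V])
  also have "\<dots> = 2 * real (triangles_at V (\<lambda>i j. i \<noteq> j \<and> R i j) i)"
    unfolding triangles_at_def T_def
    by (subst card_ordered_pairs_eq_twice_card_doubletons[OF finite_V]) (auto intro: R_sym)
  finally have "2 * real (triangles_at V (\<lambda>i j. i \<noteq> j \<and> R i j) i)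
      = (\<Sum>j\<in>V. \<Sum>k\<in>V. of_bool (j \<noteq> k \<and> T j k))" ..
  then have diff: "W - 2 * real (triangles_at V (\<lambda>i j. i \<noteq> j \<and> R i j) i)
      = (\<Sum>j\<in>V. \<Sum>k\<in>V. of_bool (R i j \<and> R i k \<and> R j k) - of_bool (j \<noteq> k \<and> T j k))"
    unfolding W_def by (simp add: sum_subtractf)
  show "0 \<le> W - 2 * real (triangles_at V (\<lambda>i j. i \<noteq> j \<and> R i j) i)"
    unfolding diff T_def by (intro sum_nonneg) auto
  have "W - 2 * real (triangles_at V (\<lambda>i j. i \<noteq> j \<and> R i j) i)
      \<le> (\<Sum>j\<in>V. \<Sum>k\<in>V. of_bool (j = i) + of_bool (k = i) + of_bool (j = k))"
    unfolding diff T_def by (intro sum_mono) auto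
  also have "\<dots> = 3 * real (card V)"
    using assms finite_V by (simp add: sum.distrib of_bool_def flip: sum_distrib_left)
  finally show "W - 2 * real (triangles_at V (\<lambda>i j. i \<noteq> j \<and> R i j) i) \<le> 3 * real (card V)" .
qed

end

section \<open>Clustering of graphs whose vertices carry types\<close>

definition empirical_freq :: "(nat \<Rightarrow> 'b) \<Rightarrow> nat \<Rightarrow> 'b \<Rightarrow> real" where
  "empirical_freq x n s = real (card {i \<in> {1..n}. x i = s}) / real n"

lemma sum_by_empirical_freq:
  assumes "finite S" and "\<And>i. i \<in> {1..n} \<Longrightarrow> x i \<in> S"
  shows "(\<Sum>i=1..n. g (x i)) = real n * (\<Sum>s\<in>S. empirical_freq x n s * g s)"
proof -
  have "(\<Sum>i=1..n. g (x i)) = (\<Sum>s\<in>S. \<Sum>i\<in>{i \<in> {1..n}. x i = s}. g (x i))"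
    by (rule sum.group[symmetric]) (use assms in auto)
  also have "\<dots> = (\<Sum>s\<in>S. real (card {i \<in> {1..n}. x i = s}) * g s)"
    by (intro sum.cong) auto
  also have "\<dots> = real n * (\<Sum>s\<in>S. empirical_freq x n s * g s)"
    by (cases "n = 0") (simp_all add: empirical_freq_def sum_distrib_left)
  finally show ?thesis .
qed

context
  fixes S :: "'b set" and R :: "'b \<Rightarrow> 'b \<Rightarrow> bool" and x :: "nat \<Rightarrow> 'b"
  assumes finite_S: "finite S"
    and x_in: "\<And>i. 1 \<le> i \<Longrightarrow> x i \<in> S"
    and R_refl: "\<And>s. s \<in> S \<Longrightarrow> R s s"
    and R_sym: "\<And>s t. R s t \<Longrightarrow> R t s"
begin

lemma sum_vertices_by_empirical_freq:
  "(\<Sum>i=1..n. g (x i)) = real n * (\<Sum>s\<in>S. empirical_freq x n s * g s)"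
  by (rule sum_by_empirical_freq[OF finite_S]) (simp add: x_in)

lemma degree_sum_by_empirical_freq:
  defines "A n s \<equiv> \<Sum>t\<in>S. empirical_freq x n t * of_bool (R s t)"
  shows "real (\<Sum>i=1..n. graph_degree {1..n} (\<lambda>i j. i \<noteq> j \<and> R (x i) (x j)) i
                       * (graph_degree {1..n} (\<lambda>i j. i \<noteq> j \<and> R (x i) (x j)) i - 1))
       = real n ^ 3 * (\<Sum>s\<in>S. empirical_freq x n s * ((A n s - 1 / n) * (A n s - 2 / n)))"
proof (cases "n = 0")
  case False
  have "real (graph_degree {1..n} (\<lambda>i j. i \<noteq> j \<and> R (x i) (x j)) i
             * (graph_degree {1..n} (\<lambda>i j. i \<noteq> j \<and> R (x i) (x j)) i - 1))
      = real n ^ 2 * ((A n (x i) - 1 / n) * (A n (x i) - 2 / n))" if "i \<in> {1..n}" for i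
  proof -
    let ?d = "graph_degree {1..n} (\<lambda>i j. i \<noteq> j \<and> R (x i) (x j)) i"
    have "real ?d = (\<Sum>j=1..n. of_bool (R (x i) (x j))) - 1"
      using that by (intro graph_degree_drop_loops) (auto simp: R_refl x_in intro: R_sym)
    also have "\<dots> = real n * A n (x i) - 1"
      unfolding A_def by (subst sum_vertices_by_empirical_freq) simp
    finally have degree: "real ?d = real n * A n (x i) - 1" .
    have "real (?d * (?d - 1)) = real ?d * (real ?d - 1)"
      by (cases ?d) (simp_all add: algebra_simps)
    also have "\<dots> = (real n * A n (x i) - 1) * (real n * A n (x i) - 2)"
      unfolding degree by (simp add: algebra_simps)
    also have "\<dots> = real n ^ 2 * ((A n (x i) - 1 / n) * (A n (x i) - 2 / n))"
      using False by (simp add: field_simps power2_eq_square)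
    finally show ?thesis .
  qed
  then have "real (\<Sum>i=1..n. graph_degree {1..n} (\<lambda>i j. i \<noteq> j \<and> R (x i) (x j)) i
                       * (graph_degree {1..n} (\<lambda>i j. i \<noteq> j \<and> R (x i) (x j)) i - 1))
      = (\<Sum>i=1..n. real n ^ 2 * ((A n (x i) - 1 / n) * (A n (x i) - 2 / n)))"
    unfolding of_nat_sum by (rule sum.cong[OF refl])
  also have "\<dots> = real n ^ 3 * (\<Sum>s\<in>S. empirical_freq x n s * ((A n s - 1 / n) * (A n s - 2 / n)))"
    by (subst sum_vertices_by_empirical_freq)
      (simp add: sum_distrib_left power3_eq_cube power2_eq_square mult_ac)
  finally show ?thesis .
qed simp

lemma triangle_sum_by_empirical_freq:
  "(\<Sum>i=1..n. \<Sum>j=1..n. \<Sum>k=1..n. of_bool (R (x i) (x j) \<and> R (x i) (x k) \<and> R (x j) (x k)))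
   = real n ^ 3 * (\<Sum>s\<in>S. empirical_freq x n s * (\<Sum>t\<in>S. empirical_freq x n t *
       (\<Sum>u\<in>S. empirical_freq x n u * of_bool (R s t \<and> R s u \<and> R t u))))"
proof -
  define \<phi> where "\<phi> s t u = (of_bool (R s t \<and> R s u \<and> R t u) :: real)" for s t u
  define f where "f = empirical_freq x n"
  have "(\<Sum>k=1..n. \<phi> s t (x k)) = real n * (\<Sum>u\<in>S. f u * \<phi> s t u)" for s t
    unfolding f_def by (rule sum_vertices_by_empirical_freq)
  moreover have "(\<Sum>j=1..n. \<Sum>u\<in>S. f u * \<phi> s (x j) u)
      = real n * (\<Sum>t\<in>S. f t * (\<Sum>u\<in>S. f u * \<phi> s t u))" for s
    unfolding f_def by (rule sum_vertices_by_empirical_freq)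
  moreover have "(\<Sum>i=1..n. \<Sum>t\<in>S. f t * (\<Sum>u\<in>S. f u * \<phi> (x i) t u))
      = real n * (\<Sum>s\<in>S. f s * (\<Sum>t\<in>S. f t * (\<Sum>u\<in>S. f u * \<phi> s t u)))"
    unfolding f_def by (rule sum_vertices_by_empirical_freq)
  ultimately show ?thesis
    unfolding \<phi>_def[symmetric] f_def[symmetric]
    by (simp add: sum_distrib_left[symmetric] power3_eq_cube del: sum_of_bool_eq)
qed

lemma triangle_sum_close_to_cubic_form:
  assumes "0 < n"
  shows "\<bar>2 * real (\<Sum>i=1..n. triangles_at {1..n} (\<lambda>i j. i \<noteq> j \<and> R (x i) (x j)) i) / real n ^ 3
          - (\<Sum>s\<in>S. empirical_freq x n s * (\<Sum>t\<in>S. empirical_freq x n t *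
              (\<Sum>u\<in>S. empirical_freq x n u * of_bool (R s t \<and> R s u \<and> R t u))))\<bar>
         \<le> 3 / real n"
proof -
  define T where "T = real (\<Sum>i=1..n. triangles_at {1..n} (\<lambda>i j. i \<noteq> j \<and> R (x i) (x j)) i)"
  define F where "F = (\<Sum>s\<in>S. empirical_freq x n s * (\<Sum>t\<in>S. empirical_freq x n t *
              (\<Sum>u\<in>S. empirical_freq x n u * of_bool (R s t \<and> R s u \<and> R t u))))"
  define W where
    "W i = (\<Sum>j=1..n. \<Sum>k=1..n. of_bool (R (x i) (x j) \<and> R (x i) (x k) \<and> R (x j) (x k)) :: real)"
    for i
  have local_bounds:
      "0 \<le> W i - 2 * real (triangles_at {1..n} (\<lambda>i j. i \<noteq> j \<and> R (x i) (x j)) i)"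
      "W i - 2 * real (triangles_at {1..n} (\<lambda>i j. i \<noteq> j \<and> R (x i) (x j)) i)
        \<le> 3 * real (card {1..n})"
    if "i \<in> {1..n}" for i
    unfolding W_def using that
    by (intro triangles_at_drop_loops; auto simp: R_refl x_in intro: R_sym)+
  have diff: "(\<Sum>i=1..n. W i) - 2 * T
      = (\<Sum>i=1..n. W i - 2 * real (triangles_at {1..n} (\<lambda>i j. i \<noteq> j \<and> R (x i) (x j)) i))"
    by (simp add: T_def sum_subtractf sum_distrib_left)
  have "0 \<le> (\<Sum>i=1..n. W i) - 2 * T"
    unfolding diff by (intro sum_nonneg local_bounds(1))
  moreover have "(\<Sum>i=1..n. W i) - 2 * T \<le> (\<Sum>i=1..n. 3 * real (card {1..n}))"
    unfolding diff by (intro sum_mono local_bounds(2))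
  moreover have "(\<Sum>i=1..n. W i) = real n ^ 3 * F"
    unfolding W_def F_def by (rule triangle_sum_by_empirical_freq)
  ultimately have "0 \<le> real n ^ 3 * F - 2 * T" "real n ^ 3 * F - 2 * T \<le> 3 * real n ^ 2"
    by (simp_all add: power2_eq_square)
  then have "\<bar>2 * T / real n ^ 3 - F\<bar> = (real n ^ 3 * F - 2 * T) / real n ^ 3"
    using assms by (simp add: field_simps)
  also have "\<dots> \<le> 3 * real n ^ 2 / real n ^ 3"
    by (rule divide_right_mono) (use \<open>real n ^ 3 * F - 2 * T \<le> 3 * real n ^ 2\<close> in auto)
  also have "\<dots> = 3 / real n"
    using assms by (simp add: power2_eq_square power3_eq_cube)
  finally show ?thesis
    unfolding T_def F_def .
qed

lemma triangle_sum_tendsto: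
  assumes freq: "\<And>s. s \<in> S \<Longrightarrow> (\<lambda>n. empirical_freq x n s) \<longlonglongrightarrow> p s"
  shows "(\<lambda>n. 2 * real (\<Sum>i=1..n. triangles_at {1..n} (\<lambda>i j. i \<noteq> j \<and> R (x i) (x j)) i) / real n ^ 3)
      \<longlonglongrightarrow> (\<Sum>s\<in>S. p s * (\<Sum>t\<in>S. p t * (\<Sum>u\<in>S. p u * of_bool (R s t \<and> R s u \<and> R t u))))"
proof -
  define F where "F n = (\<Sum>s\<in>S. empirical_freq x n s * (\<Sum>t\<in>S. empirical_freq x n t *
      (\<Sum>u\<in>S. empirical_freq x n u * of_bool (R s t \<and> R s u \<and> R t u))))" for n
  have "(\<lambda>n. 2 * real (\<Sum>i=1..n. triangles_at {1..n} (\<lambda>i j. i \<noteq> j \<and> R (x i) (x j)) i) / real n ^ 3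
      - F n) \<longlonglongrightarrow> 0"
  proof (rule Lim_null_comparison)
    show "\<forall>\<^sub>F n in sequentially.
        norm (2 * real (\<Sum>i=1..n. triangles_at {1..n} (\<lambda>i j. i \<noteq> j \<and> R (x i) (x j)) i) / real n ^ 3
          - F n) \<le> 3 / real n"
      using eventually_gt_at_top[of 0]
      by eventually_elim (unfold F_def real_norm_def, rule triangle_sum_close_to_cubic_form)
    show "(\<lambda>n. 3 / real n) \<longlonglongrightarrow> 0"
      using tendsto_mult_right_zero[OF lim_1_over_n, of 3] by simp
  qed
  moreover have "F \<longlonglongrightarrow> (\<Sum>s\<in>S. p s * (\<Sum>t\<in>S. p t * (\<Sum>u\<in>S. p u * of_bool (R s t \<and> R s u \<and> R t u))))"
    unfolding F_def by (intro tendsto_intros freq)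
  ultimately show ?thesis
    by (rule Lim_transform[rotated])
qed

text \<open>For independent types distributed according to \<open>p\<close>, \<open>L3\<close> is the probability that three
  of them are pairwise related and \<open>L2\<close> the second moment of the probability of being related to a
  given type.\<close>

theorem global_clustering_tendsto:
  fixes p :: "'b \<Rightarrow> real"
  defines "L3 \<equiv> \<Sum>s\<in>S. p s * (\<Sum>t\<in>S. p t * (\<Sum>u\<in>S. p u * of_bool (R s t \<and> R s u \<and> R t u)))"
    and "L2 \<equiv> \<Sum>s\<in>S. p s * (\<Sum>t\<in>S. p t * of_bool (R s t))\<^sup>2"
  assumes freq: "\<And>s. s \<in> S \<Longrightarrow> (\<lambda>n. empirical_freq x n s) \<longlonglongrightarrow> p s"
    and "0 < L2"
  shows "(\<lambda>n. global_clustering {1..n} (\<lambda>i j. i \<noteq> j \<and> R (x i) (x j))) \<longlonglongrightarrow> L3 / L2"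
proof -
  define E where "E = (\<lambda>i j. i \<noteq> j \<and> R (x i) (x j))"
  define A where "A n s = (\<Sum>t\<in>S. empirical_freq x n t * of_bool (R s t))" for n s
  define G where "G n = (\<Sum>s\<in>S. empirical_freq x n s * ((A n s - 1 / n) * (A n s - 2 / n)))" for n
  define T where "T n = real (\<Sum>i=1..n. triangles_at {1..n} E i)" for n
  define D where "D n = (\<Sum>i=1..n. graph_degree {1..n} E i * (graph_degree {1..n} E i - 1))" for n
  have "G \<longlonglongrightarrow> (\<Sum>s\<in>S. p s *
      (((\<Sum>t\<in>S. p t * of_bool (R s t)) - 0) * ((\<Sum>t\<in>S. p t * of_bool (R s t)) - 0)))"
    unfolding G_def A_def by (intro tendsto_intros freq lim_1_over_n)
  then have G_limit: "G \<longlonglongrightarrow> L2"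
    by (simp add: L2_def power2_eq_square)
  have "\<forall>\<^sub>F n in sequentially. (2 * T n / real n ^ 3) / G n = global_clustering {1..n} E"
    using order_tendstoD(1)[OF G_limit \<open>0 < L2\<close>] eventually_gt_at_top[of 0]
  proof eventually_elim
    case (elim n)
    have D: "real (D n) = real n ^ 3 * G n"
      unfolding D_def G_def A_def E_def by (rule degree_sum_by_empirical_freq)
    then have "0 < real (D n)"
      using elim by simp
    then have "0 < D n"
      by simp
    then have "global_clustering {1..n} E = T n / (real (D n) / 2)"
      unfolding global_clustering_def Let_def T_def D_def by simp
    then show ?case
      using elim by (simp add: D field_simps)
  qed
  moreover have "(\<lambda>n. 2 * T n / real n ^ 3) \<longlonglongrightarrow> L3"
    unfolding T_def E_def L3_def using freq by (rule triangle_sum_tendsto)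
  ultimately show ?thesis
    using G_limit \<open>0 < L2\<close> unfolding E_def[symmetric]
    by (auto intro: Lim_transform_eventually tendsto_divide)
qed
end

section \<open>Families of sets with regular disjointness\<close>

text \<open>For the key rings, \<open>d\<close> and \<open>e\<close> divided by the number of rings are \<open>q\<close> and \<open>r\<close>.\<close>

locale disjointness_regular_family =
  fixes S :: "'a set set" and d e :: nat
  assumes finite_family: "finite S"
    and disjoint_count: "\<And>s. s \<in> S \<Longrightarrow> card {t \<in> S. s \<inter> t = {}} = d"
    and common_disjoint_count:
      "\<And>s t. s \<in> S \<Longrightarrow> t \<in> S \<Longrightarrow> s \<inter> t = {} \<Longrightarrow> card {u \<in> S. s \<inter> u = {} \<and> t \<inter> u = {}} = e"
begin

lemma sum_disjoint_indicator:
  "s \<in> S \<Longrightarrow> (\<Sum>t\<in>S. of_bool (s \<inter> t = {}) :: real) = d"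
  by (simp only: sum_of_bool_eq_card[OF finite_family] disjoint_count)

lemma sum_meets_indicator:
  "s \<in> S \<Longrightarrow> (\<Sum>t\<in>S. of_bool (s \<inter> t \<noteq> {}) :: real) = real (card S) - real d"
  using sum_disjoint_indicator[of s] by (simp add: of_bool_not_iff sum_subtractf)

lemma sum_pairwise_meeting_triples:
  defines "m \<equiv> real (card S)"
  shows "(\<Sum>s\<in>S. \<Sum>t\<in>S. \<Sum>u\<in>S. of_bool (s \<inter> t \<noteq> {} \<and> s \<inter> u \<noteq> {} \<and> t \<inter> u \<noteq> {}) :: real)
       = m * (m\<^sup>2 - 3 * m * real d + 3 * (real d)\<^sup>2 - real d * real e)"
proof -
  define \<delta> where "\<delta> (s :: 'a set) t = (of_bool (s \<inter> t = {}) :: real)" for s t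
  define h where "h s t = (\<Sum>u\<in>S. \<delta> s u * \<delta> t u)" for s t
  have \<delta>_sum: "(\<Sum>t\<in>S. \<delta> s t) = d" "(\<Sum>t\<in>S. \<delta> t s) = d" if "s \<in> S" for s
    using sum_disjoint_indicator[OF that] by (simp_all add: \<delta>_def Int_commute)
  have meets: "of_bool (s \<inter> t \<noteq> {}) = 1 - \<delta> s t" for s t
    by (simp add: \<delta>_def of_bool_not_iff)
  have h_sum: "(\<Sum>t\<in>S. h s t) = d * d" if "s \<in> S" for s
  proof -
    have "(\<Sum>t\<in>S. h s t) = (\<Sum>u\<in>S. \<delta> s u * (\<Sum>t\<in>S. \<delta> t u))"
      unfolding h_def by (subst sum.swap) (simp add: sum_distrib_left)
    also have "\<dots> = d * d"
      using that by (simp add: \<delta>_sum sum_distrib_right[symmetric])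
    finally show ?thesis .
  qed
  have h_disjoint: "\<delta> s t * h s t = \<delta> s t * e" if "s \<in> S" "t \<in> S" for s t
  proof (cases "s \<inter> t = {}")
    case True
    have "h s t = (\<Sum>u\<in>S. of_bool (s \<inter> u = {} \<and> t \<inter> u = {}))"
      by (simp add: h_def \<delta>_def of_bool_conj)
    also have "\<dots> = e"
      by (simp only: sum_of_bool_eq_card[OF finite_family] common_disjoint_count[OF that True])
    finally show ?thesis by simp
  qed (simp add: \<delta>_def)
  have "(\<Sum>t\<in>S. \<Sum>u\<in>S. of_bool (s \<inter> t \<noteq> {} \<and> s \<inter> u \<noteq> {} \<and> t \<inter> u \<noteq> {}) :: real)
      = m\<^sup>2 - 3 * m * d + 3 * d\<^sup>2 - d * e" if "s \<in> S" for s
  proof -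
    have inner: "(\<Sum>u\<in>S. (1 - \<delta> s u) * (1 - \<delta> t u)) = m - 2 * real d + h s t"
      if "t \<in> S" for t
      using \<open>s \<in> S\<close> that finite_family
      by (simp add: h_def algebra_simps sum.distrib sum_subtractf \<delta>_sum m_def)
    have "(\<Sum>t\<in>S. \<Sum>u\<in>S. of_bool (s \<inter> t \<noteq> {} \<and> s \<inter> u \<noteq> {} \<and> t \<inter> u \<noteq> {}) :: real)
        = (\<Sum>t\<in>S. (1 - \<delta> s t) * (\<Sum>u\<in>S. (1 - \<delta> s u) * (1 - \<delta> t u)))"
      by (simp only: of_bool_conj sum_distrib_left meets)
    also have "\<dots> = (\<Sum>t\<in>S. (1 - \<delta> s t) * (m - 2 * real d + h s t))"
      by (simp add: inner)
    also have "\<dots> = (\<Sum>t\<in>S. (m - 2 * real d) - (m - 2 * real d) * \<delta> s t + h s t - \<delta> s t * h s t)"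
      by (simp add: algebra_simps)
    also have "\<dots> = m * (m - 2 * real d) - (m - 2 * real d) * d + d * d - d * e"
      using \<open>s \<in> S\<close> finite_family
      by (simp add: sum.distrib sum_subtractf h_sum h_disjoint \<delta>_sum m_def
          flip: sum_distrib_left sum_distrib_right)
    finally show ?thesis
      by (simp add: algebra_simps power2_eq_square)
  qed
  then show ?thesis
    by (simp add: m_def)
qed

lemma disjoint_count_less_card:
  assumes "s \<in> S" and "s \<noteq> {}"
  shows "d < card S"
proof -
  have "{t \<in> S. s \<inter> t = {}} \<subset> S"
    using assms by blast
  then show ?thesis
    using disjoint_count[OF assms(1)] finite_family by (metis psubset_card_mono)
qed

lemma uniform_pair_form:
  assumes "S \<noteq> {}"
  defines "m \<equiv> real (card S)"
  shows "(\<Sum>s\<in>S. 1 / m * (\<Sum>t\<in>S. 1 / m * of_bool (s \<inter> t \<noteq> {}))\<^sup>2) = (1 - d / m)\<^sup>2"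
proof -
  have "0 < m"
    using assms finite_family by (simp add: m_def card_gt_0_iff)
  have "(\<Sum>s\<in>S. 1 / m * (\<Sum>t\<in>S. 1 / m * of_bool (s \<inter> t \<noteq> {}))\<^sup>2)
      = (\<Sum>s\<in>S. 1 / m * ((m - d) / m)\<^sup>2)"
    by (intro sum.cong refl)
      (simp add: sum_meets_indicator m_def divide_inverse mult.commute flip: sum_distrib_left)
  also have "\<dots> = (1 - d / m)\<^sup>2"
    using \<open>0 < m\<close> by (simp add: m_def[symmetric] diff_divide_distrib)
  finally show ?thesis .
qed

lemma uniform_triple_form:
  assumes "S \<noteq> {}"
  defines "m \<equiv> real (card S)"
  shows "(\<Sum>s\<in>S. 1 / m * (\<Sum>t\<in>S. 1 / m * (\<Sum>u\<in>S. 1 / m *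
            of_bool (s \<inter> t \<noteq> {} \<and> s \<inter> u \<noteq> {} \<and> t \<inter> u \<noteq> {}))))
       = (1 - d / m) ^ 3 + (d / m) ^ 3 - d / m * (e / m)"
proof -
  have "0 < m"
    using assms finite_family by (simp add: m_def card_gt_0_iff)
  have "(\<Sum>s\<in>S. 1 / m * (\<Sum>t\<in>S. 1 / m * (\<Sum>u\<in>S. 1 / m *
            of_bool (s \<inter> t \<noteq> {} \<and> s \<inter> u \<noteq> {} \<and> t \<inter> u \<noteq> {}))))
      = (\<Sum>s\<in>S. \<Sum>t\<in>S. \<Sum>u\<in>S. of_bool (s \<inter> t \<noteq> {} \<and> s \<inter> u \<noteq> {} \<and> t \<inter> u \<noteq> {})) / m ^ 3"
    by (simp add: sum_distrib_left sum_divide_distrib power3_eq_cube mult.assoc)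
  also have "\<dots> = (1 - d / m) ^ 3 + (d / m) ^ 3 - d / m * (e / m)"
    using \<open>0 < m\<close> unfolding sum_pairwise_meeting_triples m_def[symmetric]
    by (simp add: field_simps power2_eq_square power3_eq_cube)
  finally show ?thesis .
qed

theorem global_clustering_tendsto_uniform:
  defines "m \<equiv> real (card S)"
  assumes "S \<noteq> {}" and "{} \<notin> S"
    and x_in: "\<And>i. 1 \<le> i \<Longrightarrow> x i \<in> S"
    and freq: "\<And>s. s \<in> S \<Longrightarrow> (\<lambda>n. empirical_freq x n s) \<longlonglongrightarrow> 1 / m"
  shows "(\<lambda>n. global_clustering {1..n} (\<lambda>i j. i \<noteq> j \<and> x i \<inter> x j \<noteq> {}))
      \<longlonglongrightarrow> ((1 - d / m) ^ 3 + (d / m) ^ 3 - d / m * (e / m)) / (1 - d / m)\<^sup>2"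
proof -
  obtain s where "s \<in> S" "s \<noteq> {}"
    using assms(2,3) by blast
  then have "d < card S"
    by (rule disjoint_count_less_card)
  then have "0 < (1 - d / m)\<^sup>2"
    by (simp add: m_def)
  show ?thesis
    unfolding m_def uniform_triple_form[OF assms(2), symmetric]
      uniform_pair_form[OF assms(2), symmetric]
  proof (rule global_clustering_tendsto[OF finite_family x_in])
    show "s \<inter> s \<noteq> {}" if "s \<in> S" for s
      using that assms(3) by auto
    show "t \<inter> s \<noteq> {}" if "s \<inter> t \<noteq> {}" for s t :: "'a set"
      using that by blast
    show "0 < (\<Sum>s\<in>S. 1 / real (card S) *
        (\<Sum>t\<in>S. 1 / real (card S) * of_bool (s \<inter> t \<noteq> {}))\<^sup>2)"
      using \<open>0 < (1 - d / m)\<^sup>2\<close> by (simp only: uniform_pair_form[OF assms(2)] m_def)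
    show "(\<lambda>n. empirical_freq x n s) \<longlonglongrightarrow> 1 / real (card S)" if "s \<in> S" for s
      using freq[OF that] by (simp add: m_def)
  qed
qed
end

section \<open>Key rings\<close>

lemma finite_key_rings: "finite (key_rings K P)"
  unfolding key_rings_def by (rule finite_subset[of _ "Pow {1..P}"]) auto

lemma card_key_rings: "card (key_rings K P) = P choose K"
  unfolding key_rings_def using n_subsets[of "{1..P}" K] by simp

lemma card_key_rings_disjoint:
  assumes "s \<subseteq> {1..P}"
  shows "card {t \<in> key_rings K P. s \<inter> t = {}} = (P - card s) choose K"
proof -
  have "{t \<in> key_rings K P. s \<inter> t = {}} = {t. t \<subseteq> {1..P} - s \<and> card t = K}"
    by (auto simp: key_rings_def)
  moreover have "card ({1..P} - s) = P - card s"
    using assms by (simp add: card_Diff_subset finite_subset)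
  ultimately show ?thesis
    using n_subsets[of "{1..P} - s" K] by simp
qed

lemma key_rings_disjointness_regular:
  "disjointness_regular_family (key_rings K P) ((P - K) choose K) ((P - 2 * K) choose K)"
proof
  show "finite (key_rings K P)"
    by (rule finite_key_rings)
  show "card {t \<in> key_rings K P. s \<inter> t = {}} = (P - K) choose K" if "s \<in> key_rings K P" for s
    using that card_key_rings_disjoint[of s P K] by (simp add: key_rings_def)
  show "card {u \<in> key_rings K P. s \<inter> u = {} \<and> t \<inter> u = {}} = (P - 2 * K) choose K"
    if "s \<in> key_rings K P" "t \<in> key_rings K P" "s \<inter> t = {}" for s t
  proof -
    have "finite s" "finite t"
      using that by (auto simp: key_rings_def intro: finite_subset)
    then have "card (s \<union> t) = 2 * K"
      using that by (simp add: key_rings_def card_Un_disjoint)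
    moreover have "s \<union> t \<subseteq> {1..P}"
      using that by (simp add: key_rings_def)
    ultimately show ?thesis
      using card_key_rings_disjoint[of "s \<union> t" P K] by (simp add: Int_Un_distrib2)
  qed
qed

text \<open>No case split is needed: \<open>(P - K) choose K\<close> vanishes exactly when \<open>P < 2 * K\<close>, and
  \<open>(P - 2 * K) choose K\<close> exactly when \<open>P < 3 * K\<close>.\<close>

lemma rkg_q_eq:
  assumes "1 \<le> K"
  shows "rkg_q K P = real ((P - K) choose K) / real (card (key_rings K P))"
  using assms unfolding rkg_q_def card_key_rings by (auto simp: binomial_eq_0)

lemma rkg_r_eq:
  assumes "1 \<le> K"
  shows "rkg_r K P = real ((P - 2 * K) choose K) / real (card (key_rings K P))"
  using assms unfolding rkg_r_def card_key_rings by (auto simp: binomial_eq_0)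

theorem rkg_global_clustering_tendsto:
  assumes "1 \<le> K" "K \<le> P"
    and x_in: "\<And>i. 1 \<le> i \<Longrightarrow> x i \<in> key_rings K P"
    and freq: "\<And>s. s \<in> key_rings K P \<Longrightarrow>
      (\<lambda>n. empirical_freq x n s) \<longlonglongrightarrow> 1 / real (card (key_rings K P))"
  shows "(\<lambda>n. global_clustering {1..n} (\<lambda>i j. i \<noteq> j \<and> x i \<inter> x j \<noteq> {})) \<longlonglongrightarrow> rkg_CK K P"
proof -
  interpret disjointness_regular_family "key_rings K P" "(P - K) choose K" "(P - 2 * K) choose K"
    by (rule key_rings_disjointness_regular)
  have "key_rings K P \<noteq> {}"
    using assms(2) card_key_rings[of K P] by auto
  moreover have "{} \<notin> key_rings K P"
    using assms(1) by (auto simp: key_rings_def)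
  ultimately show ?thesis
    unfolding rkg_CK_def rkg_beta_def rkg_q_eq[OF assms(1)] rkg_r_eq[OF assms(1)]
    using x_in freq by (rule global_clustering_tendsto_uniform)
qed

section \<open>Almost sure convergence of empirical frequencies\<close>

lemma tendsto_of_eventually_dist_less_inverse_Suc:
  assumes "\<And>k. \<forall>\<^sub>F n in F. dist (f n) L < inverse (real (Suc k))"
  shows "(f \<longlongrightarrow> L) F"
proof (rule tendstoI)
  fix \<epsilon> :: real
  assume "0 < \<epsilon>"
  then obtain k where "inverse (real (Suc k)) < \<epsilon>"
    using reals_Archimedean by blast
  with assms[of k] show "\<forall>\<^sub>F n in F. dist (f n) L < \<epsilon>"
    by (auto elim: eventually_mono)
qed

lemma (in prob_space) strong_law_bounded_iid:
  fixes X :: "nat \<Rightarrow> 'a \<Rightarrow> real"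
  assumes indep: "indep_vars (\<lambda>_. borel) X {1..}"
    and ident: "\<And>i. 1 \<le> i \<Longrightarrow> distr M borel (X i) = distr M borel (X 1)"
    and bounded: "AE \<omega> in M. X 1 \<omega> \<in> {a..b}" and "a < b"
  shows "AE \<omega> in M. (\<lambda>n. (\<Sum>i=1..n. X i \<omega>) / real n) \<longlonglongrightarrow> expectation (X 1)"
proof -
  define \<mu> where "\<mu> = expectation (X 1)"
  define dev where "dev \<epsilon> n = {\<omega> \<in> space M. \<epsilon> \<le> \<bar>(\<Sum>i=1..n. X i \<omega>) / real n - \<mu>\<bar>}" for \<epsilon> n
  have X_measurable[measurable]: "X i \<in> borel_measurable M" if "1 \<le> i" for i
    using indep that unfolding indep_vars_def by auto
  have dev_sets: "dev \<epsilon> n \<in> sets M" for \<epsilon> n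
    unfolding dev_def by measurable
  have hoeffding: "prob (dev \<epsilon> n) \<le> 2 * exp (-2 * real n * \<epsilon>\<^sup>2 / (b - a)\<^sup>2)"
    if "1 \<le> n" "0 \<le> \<epsilon>" for n \<epsilon>
  proof -
    interpret Hoeffding_ineq_iid M "{1..n}" X "X 1" a b \<mu>
    proof unfold_locales
      show "indep_vars (\<lambda>_. borel) X {1..n}"
        by (rule indep_vars_subset[OF indep]) auto
      show "distr M borel (X i) = distr M borel (X 1)" if "i \<in> {1..n}" for i
        using that by (intro ident) simp
      show "AE \<omega> in M. X 1 \<omega> \<in> {a..b}"
        by (fact bounded)
    qed (simp_all add: \<mu>_def)
    show ?thesis
      using Hoeffding_ineq_abs_ge'[OF \<open>0 \<le> \<epsilon>\<close> \<open>a < b\<close>] that by (simp add: dev_def)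
  qed
  text \<open>Hoeffding's bound is geometric in \<open>n\<close>, so Borel--Cantelli applies for each tolerance.\<close>
  have "AE \<omega> in M. \<forall>\<^sub>F n in sequentially. \<omega> \<notin> dev (inverse (real (Suc k))) n" for k
  proof -
    define \<epsilon> where "\<epsilon> = inverse (real (Suc k))"
    define c where "c = exp (-2 * \<epsilon>\<^sup>2 / (b - a)\<^sup>2)"
    have "0 < \<epsilon>" "c < 1"
      using \<open>a < b\<close> by (simp_all add: \<epsilon>_def c_def)
    have "summable (\<lambda>n. prob (dev \<epsilon> n))"
    proof (rule summable_comparison_test'[where N = 1])
      show "summable (\<lambda>n. 2 * c ^ n)"
        using \<open>c < 1\<close> by (simp add: c_def summable_geometric)
      show "norm (prob (dev \<epsilon> n)) \<le> 2 * c ^ n" if "1 \<le> n" for n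
        using hoeffding[OF that, of \<epsilon>] \<open>0 < \<epsilon>\<close>
        by (simp add: c_def exp_of_nat_mult[symmetric] mult_ac)
    qed
    then have "AE \<omega> in M. \<forall>\<^sub>F n in sequentially. \<omega> \<in> space M - dev \<epsilon> n"
      by (intro borel_cantelli_AE1 dev_sets) (simp_all add: less_top[symmetric])
    then show ?thesis
      unfolding \<epsilon>_def by (rule AE_mp) (auto elim: eventually_mono)
  qed
  then have "AE \<omega> in M. \<forall>k. \<forall>\<^sub>F n in sequentially. \<omega> \<notin> dev (inverse (real (Suc k))) n"
    by (simp add: AE_all_countable)
  then show ?thesis
  proof (rule AE_mp, intro AE_I2 impI)
    fix \<omega>
    assume "\<omega> \<in> space M" and "\<forall>k. \<forall>\<^sub>F n in sequentially. \<omega> \<notin> dev (inverse (real (Suc k))) n"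
    then show "(\<lambda>n. (\<Sum>i=1..n. X i \<omega>) / real n) \<longlonglongrightarrow> expectation (X 1)"
      unfolding \<mu>_def[symmetric]
      by (intro tendsto_of_eventually_dist_less_inverse_Suc)
        (auto simp: dev_def dist_real_def not_le elim: eventually_mono)
  qed
qed

lemma (in prob_space) AE_in_set_pmf:
  assumes "Y \<in> measurable M (count_space UNIV)"
    and "distr M (count_space UNIV) Y = measure_pmf p"
  shows "AE \<omega> in M. Y \<omega> \<in> set_pmf p"
proof -
  have "AE y in distr M (count_space UNIV) Y. y \<in> set_pmf p"
    unfolding assms(2) by (rule AE_measure_pmf)
  then show ?thesis
    using assms(1) by (simp add: AE_distr_iff)
qed

lemma (in prob_space) empirical_freq_tendsto_pmf:
  assumes indep: "indep_vars (\<lambda>_. count_space UNIV) Y {1..}"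
    and distr: "\<And>i. 1 \<le> i \<Longrightarrow> distr M (count_space UNIV) (Y i) = measure_pmf p"
  shows "AE \<omega> in M. (\<lambda>n. empirical_freq (\<lambda>i. Y i \<omega>) n s) \<longlonglongrightarrow> pmf p s"
proof -
  define X where "X i \<omega> = (indicator {s} (Y i \<omega>) :: real)" for i \<omega>
  have Y_measurable: "Y i \<in> measurable M (count_space UNIV)" if "1 \<le> i" for i
    using indep that unfolding indep_vars_def by auto
  have distr_X: "distr M borel (X i) = distr (measure_pmf p) borel (indicator {s})" if "1 \<le> i" for i
    unfolding X_def distr[OF that, symmetric]
    by (subst distr_distr[OF _ Y_measurable[OF that]]) (simp_all add: comp_def)
  have "expectation (X 1) = integral\<^sup>L (distr M (count_space UNIV) (Y 1)) (indicator {s})"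
    unfolding X_def by (rule integral_distr[symmetric, OF Y_measurable]) simp_all
  also have "\<dots> = pmf p s"
    using distr[of 1]
    by (simp add: measure_pmf_single)
  finally have "expectation (X 1) = pmf p s" .
  moreover have "AE \<omega> in M. (\<lambda>n. (\<Sum>i=1..n. X i \<omega>) / real n) \<longlonglongrightarrow> expectation (X 1)"
  proof (rule strong_law_bounded_iid[where a = 0 and b = 1])
    show "indep_vars (\<lambda>_. borel) X {1..}"
      unfolding X_def by (rule indep_vars_compose2[OF indep]) simp
    show "distr M borel (X i) = distr M borel (X 1)" if "1 \<le> i" for i
      using distr_X[OF that] distr_X[of 1] by simp
  qed (simp_all add: X_def)
  moreover have "(\<Sum>i=1..n. X i \<omega>) = real (card {i \<in> {1..n}. Y i \<omega> = s})" for n \<omega>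
    by (simp add: X_def indicator_def Int_def)
  ultimately show ?thesis
    by (simp add: empirical_freq_def)
qed

theorem theorem3:
  fixes M :: "'w measure" and Ks :: "nat \<Rightarrow> 'w \<Rightarrow> nat set" and K P :: nat
  assumes "prob_space M"
    and "1 \<le> K" and "K \<le> P"
    and "prob_space.indep_vars M (\<lambda>_. count_space UNIV) Ks {1..}"
    and "\<And>i. 1 \<le> i \<Longrightarrow>
           distr M (count_space UNIV) (Ks i) = measure_pmf (pmf_of_set (key_rings K P))"
  shows "AE \<omega> in M. (\<lambda>n. global_clustering {1..n} (rkg_edge Ks \<omega>)) \<longlonglongrightarrow> rkg_CK K P"
proof -
  interpret prob_space M
    by fact
  have nonempty: "key_rings K P \<noteq> {}"
    using assms(3) card_key_rings[of K P] by auto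
  have "AE \<omega> in M. Ks i \<omega> \<in> key_rings K P" if "1 \<le> i" for i
    using AE_in_set_pmf[OF _ assms(5)[OF that]] assms(4) that finite_key_rings nonempty
    by (auto simp: indep_vars_def)
  then have rings: "AE \<omega> in M. \<forall>i. 1 \<le> i \<longrightarrow> Ks i \<omega> \<in> key_rings K P"
    by (simp add: AE_all_countable)
  have "AE \<omega> in M. (\<lambda>n. empirical_freq (\<lambda>i. Ks i \<omega>) n s) \<longlonglongrightarrow> 1 / real (card (key_rings K P))"
    if "s \<in> key_rings K P" for s
    using empirical_freq_tendsto_pmf[OF assms(4,5), of s] that finite_key_rings nonempty by simp
  then have freqs: "AE \<omega> in M. \<forall>s\<in>key_rings K P.
      (\<lambda>n. empirical_freq (\<lambda>i. Ks i \<omega>) n s) \<longlonglongrightarrow> 1 / real (card (key_rings K P))"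
    by (intro AE_finite_allI finite_key_rings)
  have "rkg_edge Ks \<omega> = (\<lambda>i j. i \<noteq> j \<and> Ks i \<omega> \<inter> Ks j \<omega> \<noteq> {})" for \<omega>
    by (simp add: rkg_edge_def fun_eq_iff)
  with rings freqs show ?thesis
    using rkg_global_clustering_tendsto[OF assms(2,3)] by auto
qed
end
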